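(* Let $X_1=U_1\Sigma_1V_1^T$, $X_2=U_2\Sigma_2V_2^T$ and $(X_1~X_2)=U\Sigma V^T$ be (compact) SVDs, where $X_1,X_2$ have the same number of rows. Assume the nonzero singular values of $X_1$, of $X_2$, and of $(X_1~X_2)$ are each distinct. Suppose $U_1$ and $U_2$ may share some identical columns, and that every column of $U_1$ not appearing in $U_2$ is orthogonal to every column of $U_2$ not appearing in $U_1$. Then every column of $U_1$ and every column of $U_2$ is (up to sign) a column of $U$. *)

theory Defs
  imports "Jordan_Normal_Form.Matrix"
begin

definition hcat :: "'a mat \<Rightarrow> 'a mat \<Rightarrow> 'a mat" where
  "hcat A B = mat (dim_row A) (dim_col A + dim_col B)
     (\<lambda>(i, j). if j < dim_col A then A $$ (i, j) else B $$ (i, j - dim_col A))"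

definition compact_svd :: "real mat \<Rightarrow> real mat \<Rightarrow> real mat \<Rightarrow> real mat \<Rightarrow> bool" where
  "compact_svd X U S V \<longleftrightarrow>
     (let m = dim_row X; n = dim_col X; r = dim_col U in
       U \<in> carrier_mat m r \<and> S \<in> carrier_mat r r \<and> V \<in> carrier_mat n r \<and>
       transpose_mat U * U = 1\<^sub>m r \<and> transpose_mat V * V = 1\<^sub>m r \<and>
       diagonal_mat S \<and> (\<forall>i<r. S $$ (i, i) > 0) \<and>
       X = U * S * transpose_mat V)"

definition distinct_sv :: "real mat \<Rightarrow> bool" where
  "distinct_sv S \<longleftrightarrow> (\<forall>i<dim_row S. \<forall>j<dim_row S. i \<noteq> j \<longrightarrow> S $$ (i, i) \<noteq> S $$ (j, j))"

end

(*
  For a compact SVD X = U S V^T we have X X^T = U S^2 U^T: the columns of U are eigenvectors of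
  X X^T with positive eigenvalues, vectors orthogonal to all of them lie in its kernel, and if the
  singular values are distinct, every unit eigenvector with nonzero eigenvalue is +/- a column of U.
  The Gram matrix of (X1 X2) is X1 X1^T + X2 X2^T.  A column u of U1 is an eigenvector of X2 X2^T
  as well: either u is also a column of U2, or u is orthogonal to every column of U2 (to the shared
  ones by orthonormality of U1, to the others by hypothesis).  So u is a unit eigenvector of the
  Gram matrix of (X1 X2) with positive eigenvalue, hence +/- a column of U.
*)

theory Submission
  imports Defs
begin

lemma diagonal_mat_row:
  fixes D :: "'a::semiring_1 mat"
  assumes "D \<in> carrier_mat n n" "diagonal_mat D" "k < n"
  shows "row D k = D $$ (k, k) \<cdot>\<^sub>v unit_vec n k"
  using assms unfolding diagonal_mat_def by (intro eq_vecI) auto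

lemma diagonal_mat_mult_vec_index:
  fixes D :: "'a::comm_semiring_1 mat"
  assumes "D \<in> carrier_mat n n" "diagonal_mat D" "y \<in> carrier_vec n" "k < n"
  shows "(D *\<^sub>v y) $ k = D $$ (k, k) * y $ k"
  using assms by (simp add: diagonal_mat_row)

lemma diagonal_mat_mult_index:
  fixes A B :: "'a::comm_semiring_1 mat"
  assumes "A \<in> carrier_mat n n" "diagonal_mat A" "B \<in> carrier_mat n n" "i < n" "j < n"
  shows "(A * B) $$ (i, j) = A $$ (i, i) * B $$ (i, j)"
  using assms by (simp add: diagonal_mat_row)

lemma diagonal_mat_mult:
  fixes A B :: "'a::comm_semiring_1 mat"
  assumes "A \<in> carrier_mat n n" "diagonal_mat A" "B \<in> carrier_mat n n" "diagonal_mat B"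
  shows "diagonal_mat (A * B)"
  unfolding diagonal_mat_def
proof (intro allI impI)
  fix i j assume "i < dim_row (A * B)" "j < dim_col (A * B)" "i \<noteq> j"
  then show "(A * B) $$ (i, j) = 0"
    using assms diagonal_mat_mult_index[OF assms(1-3)] by (auto simp: diagonal_mat_def)
qed

lemma diagonal_mat_transpose:
  assumes "D \<in> carrier_mat n n" "diagonal_mat D"
  shows "transpose_mat D = D"
  using assms unfolding diagonal_mat_def by (intro eq_matI) (auto, metis)

lemma diagonal_mat_eigenvector_unit_vec:
  fixes D :: "'a::idom mat"
  assumes D: "D \<in> carrier_mat r r" "diagonal_mat D"
    and distinct: "\<And>k l. k < r \<Longrightarrow> l < r \<Longrightarrow> k \<noteq> l \<Longrightarrow> D $$ (k, k) \<noteq> D $$ (l, l)"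
    and w: "w \<in> carrier_vec r" "w \<noteq> 0\<^sub>v r"
    and eig: "D *\<^sub>v w = lam \<cdot>\<^sub>v w"
  obtains k where "k < r" "w = w $ k \<cdot>\<^sub>v unit_vec r k"
proof -
  have eigenvalue: "D $$ (k, k) = lam" if "k < r" "w $ k \<noteq> 0" for k
  proof -
    have "D $$ (k, k) * w $ k = (D *\<^sub>v w) $ k"
      using diagonal_mat_mult_vec_index[OF D w(1) that(1)] by simp
    also have "\<dots> = lam * w $ k"
      using eig w that by simp
    finally show ?thesis
      using that by simp
  qed
  obtain k where k: "k < r" "w $ k \<noteq> 0"
    using w by (metis eq_vecI carrier_vecD index_zero_vec)
  have "w $ l = 0" if "l < r" "l \<noteq> k" for l
    using eigenvalue distinct k that by metis
  then have "w = w $ k \<cdot>\<^sub>v unit_vec r k"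
    using w k by (intro eq_vecI) auto
  then show thesis using k(1) that by blast
qed

lemma mult_mat_vec_assoc3:
  assumes "A \<in> carrier_mat n\<^sub>1 n\<^sub>2" "B \<in> carrier_mat n\<^sub>2 n\<^sub>3" "C \<in> carrier_mat n\<^sub>3 n\<^sub>4"
    "v \<in> carrier_vec n\<^sub>4"
  shows "(A * B * C) *\<^sub>v v = A *\<^sub>v (B *\<^sub>v (C *\<^sub>v v))"
proof -
  have "(A * B * C) *\<^sub>v v = (A * B) *\<^sub>v (C *\<^sub>v v)"
    using assms by (intro assoc_mult_mat_vec[of _ n\<^sub>1 n\<^sub>3]) auto
  also have "\<dots> = A *\<^sub>v (B *\<^sub>v (C *\<^sub>v v))"
    using assms by (intro assoc_mult_mat_vec[of _ n\<^sub>1 n\<^sub>2]) auto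
  finally show ?thesis .
qed

lemma orthonormal_cols_scalar_prod:
  fixes U :: "'a::comm_semiring_1 mat"
  assumes "U \<in> carrier_mat m r" "transpose_mat U * U = 1\<^sub>m r" "k < r" "l < r"
  shows "col U k \<bullet> col U l = (if k = l then 1 else 0)"
proof -
  have "col U k \<bullet> col U l = (transpose_mat U * U) $$ (k, l)"
    using assms(1,3,4) by simp
  also have "\<dots> = 1\<^sub>m r $$ (k, l)"
    by (simp only: assms(2))
  finally show ?thesis using assms by simp
qed

lemma mult_mat_vec_unit_vec:
  fixes U :: "'a::semiring_1 mat"
  assumes "U \<in> carrier_mat m r" "k < r"
  shows "U *\<^sub>v unit_vec r k = col U k"
  using assms by (intro eq_vecI) auto

lemma orthonormal_cols_transpose_mult_col:
  fixes U :: "'a::comm_semiring_1 mat"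
  assumes "U \<in> carrier_mat m r" "transpose_mat U * U = 1\<^sub>m r" "k < r"
  shows "transpose_mat U *\<^sub>v col U k = unit_vec r k"
  using col_mult2[of "transpose_mat U" r m U r k] assms by simp

lemma orthonormal_diag_mult_col:
  fixes U D :: "'a::field mat"
  assumes U: "U \<in> carrier_mat m r" "transpose_mat U * U = 1\<^sub>m r"
    and D: "D \<in> carrier_mat r r" "diagonal_mat D" and k: "k < r"
  shows "(U * D * transpose_mat U) *\<^sub>v col U k = D $$ (k, k) \<cdot>\<^sub>v col U k"
proof -
  have "D *\<^sub>v unit_vec r k = D $$ (k, k) \<cdot>\<^sub>v unit_vec r k"
    using D k by (intro eq_vecI) (auto simp: diagonal_mat_row)
  then have "(U * D * transpose_mat U) *\<^sub>v col U k = U *\<^sub>v (D $$ (k, k) \<cdot>\<^sub>v unit_vec r k)"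
    using U D k by (simp add: mult_mat_vec_assoc3[of _ m r _ r _ m] orthonormal_cols_transpose_mult_col
        del: assoc_mult_mat)
  also have "\<dots> = D $$ (k, k) \<cdot>\<^sub>v col U k"
    using U k by (simp add: mult_mat_vec mult_mat_vec_unit_vec)
  finally show ?thesis .
qed

lemma orthonormal_diag_mult_orthogonal:
  fixes U D :: "'a::comm_semiring_1 mat"
  assumes U: "U \<in> carrier_mat m r" and D: "D \<in> carrier_mat r r"
    and u: "u \<in> carrier_vec m" and orth: "\<And>k. k < r \<Longrightarrow> col U k \<bullet> u = 0"
  shows "(U * D * transpose_mat U) *\<^sub>v u = 0\<^sub>v m"
proof -
  have "transpose_mat U *\<^sub>v u = 0\<^sub>v r"
    using U orth by (intro eq_vecI) auto
  moreover have "M *\<^sub>v 0\<^sub>v n = 0\<^sub>v (dim_row M)" for M :: "'a mat" and n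
    by (intro eq_vecI) (auto simp: scalar_prod_def)
  ultimately show ?thesis
    using U D u by (simp add: mult_mat_vec_assoc3[of _ m r _ r _ m] del: assoc_mult_mat)
qed

lemma orthonormal_diag_eigenvector:
  fixes U D :: "real mat"
  assumes U: "U \<in> carrier_mat m r" "transpose_mat U * U = 1\<^sub>m r"
    and D: "D \<in> carrier_mat r r" "diagonal_mat D"
    and distinct: "\<And>k l. k < r \<Longrightarrow> l < r \<Longrightarrow> k \<noteq> l \<Longrightarrow> D $$ (k, k) \<noteq> D $$ (l, l)"
    and u: "u \<in> carrier_vec m" "u \<bullet> u = 1"
    and eig: "(U * D * transpose_mat U) *\<^sub>v u = lam \<cdot>\<^sub>v u" and lam: "lam \<noteq> 0"
  shows "\<exists>k<r. u = col U k \<or> u = - col U k"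
proof -
  define w where "w = transpose_mat U *\<^sub>v u"
  have w: "w \<in> carrier_vec r"
    using U u by (simp add: w_def)
  have UDw: "U *\<^sub>v (D *\<^sub>v w) = lam \<cdot>\<^sub>v u"
    using eig U D u by (simp add: w_def mult_mat_vec_assoc3[of _ m r _ r _ m] del: assoc_mult_mat)
  have "D *\<^sub>v w = (transpose_mat U * U) *\<^sub>v (D *\<^sub>v w)"
    using U D w by simp
  also have "\<dots> = transpose_mat U *\<^sub>v (lam \<cdot>\<^sub>v u)"
    using U(1) D w by (simp add: UDw)
  also have "\<dots> = lam \<cdot>\<^sub>v w"
    using U u by (simp add: w_def mult_mat_vec)
  finally have Dw: "D *\<^sub>v w = lam \<cdot>\<^sub>v w" .
  have "lam \<cdot>\<^sub>v u = lam \<cdot>\<^sub>v (U *\<^sub>v w)"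
    using U w by (simp add: UDw[symmetric] Dw mult_mat_vec)
  then have "(1 / lam) \<cdot>\<^sub>v (lam \<cdot>\<^sub>v u) = (1 / lam) \<cdot>\<^sub>v (lam \<cdot>\<^sub>v (U *\<^sub>v w))"
    by simp
  then have u_eq: "u = U *\<^sub>v w"
    using lam by (simp add: smult_smult_assoc)
  have w_nonzero: "w \<noteq> 0\<^sub>v r"
  proof
    assume "w = 0\<^sub>v r"
    then have "u = 0\<^sub>v m"
      using u_eq U by (intro eq_vecI) (auto simp: scalar_prod_def)
    then show False
      using u by simp
  qed
  obtain k where k: "k < r" and w_unit: "w = w $ k \<cdot>\<^sub>v unit_vec r k"
    using diagonal_mat_eigenvector_unit_vec[OF D distinct w w_nonzero Dw] by blast
  define c where "c = w $ k"
  have "u = U *\<^sub>v (c \<cdot>\<^sub>v unit_vec r k)"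
    using u_eq w_unit by (simp add: c_def)
  then have u_col: "u = c \<cdot>\<^sub>v col U k"
    using U k by (simp add: mult_mat_vec mult_mat_vec_unit_vec)
  have "c * c = 1"
    using u U k by (simp add: u_col orthonormal_cols_scalar_prod)
  then have "c = 1 \<or> c = -1"
    by (metis mult_cancel_left2 square_eq_1_iff)
  then have "u = col U k \<or> u = - col U k"
    using u_col U k by (auto intro!: eq_vecI)
  with k show ?thesis by blast
qed

lemma compact_svdD:
  assumes "compact_svd X U S V"
  shows "U \<in> carrier_mat (dim_row X) (dim_col U)" "S \<in> carrier_mat (dim_col U) (dim_col U)"
    "V \<in> carrier_mat (dim_col X) (dim_col U)"
    "transpose_mat U * U = 1\<^sub>m (dim_col U)" "transpose_mat V * V = 1\<^sub>m (dim_col U)"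
    "diagonal_mat S" "\<And>i. i < dim_col U \<Longrightarrow> 0 < S $$ (i, i)" "X = U * S * transpose_mat V"
  using assms unfolding compact_svd_def Let_def by blast+

lemma compact_svd_gram:
  assumes "compact_svd X U S V"
  shows "X * transpose_mat X = U * (S * S) * transpose_mat U"
proof -
  note svd = compact_svdD[OF assms]
  define m n r where "m = dim_row X" and "n = dim_col X" and "r = dim_col U"
  have U: "U \<in> carrier_mat m r" and S: "S \<in> carrier_mat r r" and V: "V \<in> carrier_mat n r"
    unfolding m_def n_def r_def by (fact svd(1-3))+
  have "transpose_mat (U * S * transpose_mat V) = transpose_mat (transpose_mat V) * transpose_mat (U * S)"
    using U S V by (intro transpose_mult[of _ m r _ n]) auto
  also have "\<dots> = V * (S * transpose_mat U)"
    using U S by (simp add: transpose_mult[of U m r S r] diagonal_mat_transpose[OF S svd(6)])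
  finally have XT: "transpose_mat X = V * (S * transpose_mat U)"
    by (subst svd(8))
  have "X * transpose_mat X = U * S * (transpose_mat V * (V * (S * transpose_mat U)))"
    unfolding XT by (subst svd(8)) (use U S V in \<open>intro assoc_mult_mat[of _ m r _ n _ m]; auto\<close>)
  also have "transpose_mat V * (V * (S * transpose_mat U)) = S * transpose_mat U"
    using U S V svd(5) by (simp flip: r_def assoc_mult_mat[of _ r n _ r _ m])
  also have "U * S * (S * transpose_mat U) = U * (S * (S * transpose_mat U))"
    using U S by (intro assoc_mult_mat[of _ m r _ r _ m]) auto
  also have "\<dots> = U * (S * S) * transpose_mat U"
    using U S by (simp add: assoc_mult_mat[of U m r "S * S" r _ m] assoc_mult_mat[of S r r S r _ m])
  finally show ?thesis .
qed

lemma compact_svd_col_unit: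
  assumes "compact_svd X U S V" "u \<in> set (cols U)"
  shows "u \<in> carrier_vec (dim_row X)" "u \<bullet> u = 1"
proof -
  note svd = compact_svdD[OF assms(1)]
  obtain k where "k < dim_col U" "u = col U k"
    using assms(2) by (auto simp: in_set_conv_nth)
  then show "u \<in> carrier_vec (dim_row X)" "u \<bullet> u = 1"
    using carrier_matD(1)[OF svd(1)] orthonormal_cols_scalar_prod[OF svd(1,4)]
    by (auto intro: carrier_vecI)
qed

lemma compact_svd_gram_mult_col:
  assumes "compact_svd X U S V" "k < dim_col U"
  shows "(X * transpose_mat X) *\<^sub>v col U k = (S $$ (k, k))\<^sup>2 \<cdot>\<^sub>v col U k"
proof -
  note svd = compact_svdD[OF assms(1)]
  have "(S * S) $$ (k, k) = (S $$ (k, k))\<^sup>2"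
    using diagonal_mat_mult_index[OF svd(2,6,2) assms(2,2)] by (simp add: power2_eq_square)
  then show ?thesis
    using orthonormal_diag_mult_col[OF svd(1,4) _ diagonal_mat_mult[OF svd(2,6,2,6)] assms(2)] svd(2)
    by (simp add: compact_svd_gram[OF assms(1)])
qed

lemma compact_svd_gram_mult_orthogonal:
  assumes "compact_svd X U S V" "u \<in> carrier_vec (dim_row X)"
    "\<And>k. k < dim_col U \<Longrightarrow> col U k \<bullet> u = 0"
  shows "(X * transpose_mat X) *\<^sub>v u = 0\<^sub>v (dim_row X)"
proof -
  note svd = compact_svdD[OF assms(1)]
  show ?thesis
    using orthonormal_diag_mult_orthogonal[OF svd(1) _ assms(2,3)] svd(2)
    by (simp add: compact_svd_gram[OF assms(1)])
qed

lemma compact_svd_gram_eigenvector: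
  assumes "compact_svd X U S V" "distinct_sv S"
    and "u \<in> carrier_vec (dim_row X)" "u \<bullet> u = 1"
    and "(X * transpose_mat X) *\<^sub>v u = lam \<cdot>\<^sub>v u" "lam \<noteq> 0"
  shows "\<exists>k<dim_col U. u = col U k \<or> u = - col U k"
proof -
  note svd = compact_svdD[OF assms(1)]
  have square: "(S * S) $$ (k, k) = (S $$ (k, k))\<^sup>2" if "k < dim_col U" for k
    using diagonal_mat_mult_index[OF svd(2,6,2) that that] by (simp add: power2_eq_square)
  have "(S * S) $$ (k, k) \<noteq> (S * S) $$ (l, l)"
    if "k < dim_col U" "l < dim_col U" "k \<noteq> l" for k l
  proof -
    have "S $$ (k, k) \<noteq> S $$ (l, l)"
      using assms(2) svd(2) that unfolding distinct_sv_def by auto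
    then show ?thesis
      using svd(7) that by (simp add: square power2_eq_iff_nonneg less_imp_le)
  qed
  moreover have "S * S \<in> carrier_mat (dim_col U) (dim_col U)"
    using svd(2) by simp
  moreover have "(U * (S * S) * transpose_mat U) *\<^sub>v u = lam \<cdot>\<^sub>v u"
    using assms(5) unfolding compact_svd_gram[OF assms(1)] .
  ultimately show ?thesis
    using orthonormal_diag_eigenvector[OF svd(1,4) _ diagonal_mat_mult[OF svd(2,6,2,6)] _ assms(3,4) _ assms(6)]
    by blast
qed

lemma compact_svd_gram_eigenvalue_nonneg:
  assumes "compact_svd X U S V" "u \<in> carrier_vec (dim_row X)"
    and "u \<in> set (cols U) \<or> (\<forall>v\<in>set (cols U). v \<bullet> u = 0)"
  shows "\<exists>\<mu>\<ge>0. (X * transpose_mat X) *\<^sub>v u = \<mu> \<cdot>\<^sub>v u"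
  using assms(3)
proof
  assume "u \<in> set (cols U)"
  then obtain k where "k < dim_col U" "u = col U k"
    by (auto simp: in_set_conv_nth)
  then have "(X * transpose_mat X) *\<^sub>v u = (S $$ (k, k))\<^sup>2 \<cdot>\<^sub>v u"
    using compact_svd_gram_mult_col[OF assms(1)] by simp
  then show ?thesis
    using zero_le_power2 by blast
next
  assume orth: "\<forall>v\<in>set (cols U). v \<bullet> u = 0"
  have "col U k \<bullet> u = 0" if "k < dim_col U" for k
    using orth nth_mem[of k "cols U"] that by simp
  then have "(X * transpose_mat X) *\<^sub>v u = 0 \<cdot>\<^sub>v u"
    using compact_svd_gram_mult_orthogonal[OF assms(1,2)] assms(2) by (intro eq_vecI) auto
  then show ?thesis by blast
qed

lemma row_hcat:
  assumes "i < dim_row A"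
  shows "row (hcat A B) i = row A i @\<^sub>v row B i"
  using assms unfolding hcat_def by (intro eq_vecI) (auto simp: row_def)

lemma hcat_gram:
  fixes A B :: "'a::comm_ring_1 mat"
  assumes "dim_row A = dim_row B"
  shows "hcat A B * transpose_mat (hcat A B) = A * transpose_mat A + B * transpose_mat B"
proof (rule eq_matI)
  fix i j
  assume "i < dim_row (A * transpose_mat A + B * transpose_mat B)"
    "j < dim_col (A * transpose_mat A + B * transpose_mat B)"
  then have ij: "i < dim_row A" "j < dim_row A"
    using assms by simp_all
  have "(hcat A B * transpose_mat (hcat A B)) $$ (i, j) = row (hcat A B) i \<bullet> row (hcat A B) j"
    using ij by (simp add: hcat_def)
  also have "\<dots> = row A i \<bullet> row A j + row B i \<bullet> row B j"
    using ij by (simp add: row_hcat scalar_prod_append[of _ "dim_col A" _ "dim_col B"])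
  also have "\<dots> = (A * transpose_mat A + B * transpose_mat B) $$ (i, j)"
    using ij assms by simp
  finally show "(hcat A B * transpose_mat (hcat A B)) $$ (i, j) = (A * transpose_mat A + B * transpose_mat B) $$ (i, j)" .
qed (simp_all add: hcat_def assms)

definition unshared_cols_orthogonal :: "'a::comm_ring mat \<Rightarrow> 'a mat \<Rightarrow> bool" where
  "unshared_cols_orthogonal A B \<longleftrightarrow> (\<forall>a\<in>set (cols A). \<forall>b\<in>set (cols B).
     a \<notin> set (cols B) \<longrightarrow> b \<notin> set (cols A) \<longrightarrow> a \<bullet> b = 0)"

lemma unshared_cols_orthogonal_sym:
  assumes "unshared_cols_orthogonal A B" "dim_row A = dim_row B"
  shows "unshared_cols_orthogonal B A"
  unfolding unshared_cols_orthogonal_def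
proof (intro ballI impI)
  fix b a assume b: "b \<in> set (cols B)" and a: "a \<in> set (cols A)"
    and "b \<notin> set (cols A)" "a \<notin> set (cols B)"
  then have "a \<bullet> b = 0"
    using assms(1) unfolding unshared_cols_orthogonal_def by blast
  moreover have "a \<in> carrier_vec (dim_row A)" "b \<in> carrier_vec (dim_row A)"
    using a b cols_dim[of A] cols_dim[of B] unfolding assms(2) by blast+
  ultimately show "b \<bullet> a = 0"
    using comm_scalar_prod by metis
qed

lemma gram_sum_col_eigenvector:
  assumes rows: "dim_row XA = dim_row XB"
    and svdA: "compact_svd XA UA SA VA" and svdB: "compact_svd XB UB SB VB"
    and orth: "unshared_cols_orthogonal UA UB" and u: "u \<in> set (cols UA)"
  shows "\<exists>lam>0. (XA * transpose_mat XA + XB * transpose_mat XB) *\<^sub>v u = lam \<cdot>\<^sub>v u"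
proof -
  note svdA' = compact_svdD[OF svdA]
  obtain i where i: "i < dim_col UA" and u_col: "u = col UA i"
    using u by (auto simp: in_set_conv_nth)
  have u_carrier: "u \<in> carrier_vec (dim_row XA)"
    using compact_svd_col_unit(1)[OF svdA u] .
  have eigA: "(XA * transpose_mat XA) *\<^sub>v u = (SA $$ (i, i))\<^sup>2 \<cdot>\<^sub>v u"
    using compact_svd_gram_mult_col[OF svdA i] u_col by simp
  have "\<forall>v\<in>set (cols UB). v \<bullet> u = 0" if not_shared: "u \<notin> set (cols UB)"
  proof
    fix v assume v: "v \<in> set (cols UB)"
    show "v \<bullet> u = 0"
    proof (cases "v \<in> set (cols UA)")
      case True
      then obtain j where j: "j < dim_col UA" "v = col UA j"
        by (auto simp: in_set_conv_nth)
      with u_col v not_shared have "j \<noteq> i"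
        by blast
      then show ?thesis
        using orthonormal_cols_scalar_prod[OF svdA'(1,4) j(1) i] j(2) u_col by simp
    next
      case False
      have "v \<in> carrier_vec (dim_row XA)"
        using compact_svd_col_unit(1)[OF svdB v] rows by simp
      then show ?thesis
        using orth u v not_shared False comm_scalar_prod[OF _ u_carrier]
        unfolding unshared_cols_orthogonal_def by simp
    qed
  qed
  moreover have "u \<in> carrier_vec (dim_row XB)"
    using u_carrier rows by simp
  ultimately obtain \<mu> where "\<mu> \<ge> 0" and eigB: "(XB * transpose_mat XB) *\<^sub>v u = \<mu> \<cdot>\<^sub>v u"
    using compact_svd_gram_eigenvalue_nonneg[OF svdB] by blast
  have "(XA * transpose_mat XA + XB * transpose_mat XB) *\<^sub>v u
      = (XA * transpose_mat XA) *\<^sub>v u + (XB * transpose_mat XB) *\<^sub>v u"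
    using u_carrier rows by (intro add_mult_distrib_mat_vec[of _ "dim_row XA" "dim_row XA"]) auto
  also have "\<dots> = ((SA $$ (i, i))\<^sup>2 + \<mu>) \<cdot>\<^sub>v u"
    unfolding eigA eigB by (rule add_smult_distrib_vec[symmetric])
  finally have "(XA * transpose_mat XA + XB * transpose_mat XB) *\<^sub>v u = ((SA $$ (i, i))\<^sup>2 + \<mu>) \<cdot>\<^sub>v u" .
  moreover have "(SA $$ (i, i))\<^sup>2 + \<mu> > 0"
    using svdA'(7)[OF i] \<open>\<mu> \<ge> 0\<close> by (simp add: add_pos_nonneg)
  ultimately show ?thesis
    by blast
qed

lemma gram_sum_svd_has_col:
  assumes rows: "dim_row XA = dim_row XB"
    and svdA: "compact_svd XA UA SA VA" and svdB: "compact_svd XB UB SB VB"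
    and orth: "unshared_cols_orthogonal UA UB"
    and svd: "compact_svd Y U S V" "distinct_sv S"
    and gram: "Y * transpose_mat Y = XA * transpose_mat XA + XB * transpose_mat XB"
    and i: "i < dim_col UA"
  shows "\<exists>k<dim_col U. col UA i = col U k \<or> col UA i = - col U k"
proof -
  have u: "col UA i \<in> set (cols UA)"
    using i by (metis cols_length cols_nth nth_mem)
  obtain lam where "lam > 0" and "(Y * transpose_mat Y) *\<^sub>v col UA i = lam \<cdot>\<^sub>v col UA i"
    using gram_sum_col_eigenvector[OF rows svdA svdB orth u] unfolding gram by blast
  moreover have "dim_row Y = dim_row XA"
    using arg_cong[OF gram, of dim_row] rows by simp
  then have "col UA i \<in> carrier_vec (dim_row Y)"
    using compact_svd_col_unit(1)[OF svdA u] by simp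
  ultimately show ?thesis
    using compact_svd_gram_eigenvector[OF svd _ compact_svd_col_unit(2)[OF svdA u]] by simp
qed

theorem mainTheorem4:
  fixes X1 X2 U1 S1 V1 U2 S2 V2 U S V :: "real mat"
  assumes rows: "dim_row X1 = dim_row X2"
    and svd1: "compact_svd X1 U1 S1 V1"
    and svd2: "compact_svd X2 U2 S2 V2"
    and svd: "compact_svd (hcat X1 X2) U S V"
    and d1: "distinct_sv S1" and d2: "distinct_sv S2" and d: "distinct_sv S"
    and orth: "\<forall>i<dim_col U1. \<forall>j<dim_col U2.
       col U1 i \<notin> set (cols U2) \<longrightarrow> col U2 j \<notin> set (cols U1) \<longrightarrow>
       col U1 i \<bullet> col U2 j = 0"
  shows "(\<forall>i<dim_col U1. \<exists>k<dim_col U. col U1 i = col U k \<or> col U1 i = - col U k) \<and>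
         (\<forall>j<dim_col U2. \<exists>k<dim_col U. col U2 j = col U k \<or> col U2 j = - col U k)"
proof -
  have orth12: "unshared_cols_orthogonal U1 U2"
    using orth unfolding unshared_cols_orthogonal_def by (auto simp: in_set_conv_nth)
  have orth21: "unshared_cols_orthogonal U2 U1"
    using unshared_cols_orthogonal_sym[OF orth12] compact_svdD(1)[OF svd1] compact_svdD(1)[OF svd2] rows
    by simp
  have gram: "hcat X1 X2 * transpose_mat (hcat X1 X2) = X1 * transpose_mat X1 + X2 * transpose_mat X2"
    using hcat_gram[OF rows] .
  also have "\<dots> = X2 * transpose_mat X2 + X1 * transpose_mat X1"
    using rows by (intro comm_add_mat[of _ "dim_row X1" "dim_row X1"]) auto
  finally have gram': "hcat X1 X2 * transpose_mat (hcat X1 X2) = X2 * transpose_mat X2 + X1 * transpose_mat X1" .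
  show ?thesis
    using gram_sum_svd_has_col[OF rows svd1 svd2 orth12 svd d gram]
      gram_sum_svd_has_col[OF rows[symmetric] svd2 svd1 orth21 svd d gram'] by blast
qed

end
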